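(* Let $C([0,1])$ be the space of continuous real functions on $[0,1]$ with the norm $\|f\|_\infty = \sup_{t\in[0,1]}|f(t)|$ and its Borel $\sigma$-algebra $\mathcal{A}$ (for the norm topology). Let $\{X_{Q,\mathbf{d}} : \Omega \to C([0,1]) \mid \mathbf{d}\in D^n\}$ be a family of measurable maps. For $k\ge1$ and $0\le t_1<\cdots<t_k\le1$ let $\pi_{t_1,\dots,t_k}: C([0,1]) \to \mathbb{R}^k$, $f \mapsto (f(t_1),\dots,f(t_k))$, and $X^{t_1,\dots,t_k}_{Q,\mathbf{d}} = \pi_{t_1,\dots,t_k}\circ X_{Q,\mathbf{d}}$. Let $\epsilon\ge0$, $0\le\delta\le1$. Suppose that for every $k$ and every $t_1<\dots<t_k$ in $[0,1]$, $$\mathbb{P}(X^{t_1,\dots,t_k}_{Q,\mathbf{d}}\in B) \le e^\epsilon\, \mathbb{P}(X^{t_1,\dots,t_k}_{Q,\mathbf{d}'}\in B) + \delta$$ for all $\mathbf{d}\sim\mathbf{d}'$ in $D^n$ and all Borel sets $B\subseteq\mathbb{R}^k$. Then $\mathbb{P}(X_{Q,\mathbf{d}}\in A)\le e^\epsilon\,\mathbb{P}(X_{Q,\mathbf{d}'}\in A)+\delta$ for all $\mathbf{d}\sim\mathbf{d}'$ in $D^n$ and all $A\in\mathcal{A}$.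
   Context: $(U,\rho)$ is a metric space, $D\subseteq U$, $n\ge1$, and $(\Omega,\mathcal{F},\mathbb{P})$ is a probability space. Two databases $\mathbf{d}=(d_1,\dots,d_n), \mathbf{d}'=(d_1',\dots,d_n') \in D^n$ are neighbours, written $\mathbf{d}\sim\mathbf{d}'$, if there is exactly one index $j$ with $d_j \ne d_j'$ (and $d_i = d_i'$ for all $i\ne j$); the relation is symmetric. *)

theory Defs
  imports "HOL-Analysis.Analysis" "HOL-Probability.Probability"
begin

definition neighbours :: "'a list \<Rightarrow> 'a list \<Rightarrow> bool" where
  "neighbours d d' \<longleftrightarrow> length d = length d' \<and>
     (\<exists>!j. j < length d \<and> d ! j \<noteq> d' ! j)"

definition databases :: "'a set \<Rightarrow> nat \<Rightarrow> 'a list set" where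
  "databases D n = {d. length d = n \<and> set d \<subseteq> D}"

text \<open>The space C([0,1]) with the sup norm, realised isometrically inside the Banach
  space of bounded continuous functions real \<Rightarrow> real: a function continuous on [0,1] is
  identified with its constant extension f(t) = f(max 0 (min 1 t)).  The sup norm of
  bcontfun then equals the sup over [0,1].\<close>
definition clamp01 :: "real \<Rightarrow> real" where
  "clamp01 t = max 0 (min 1 t)"

definition C01 :: "(real, real) bcontfun set" where
  "C01 = {f. \<forall>t. apply_bcontfun f t = apply_bcontfun f (clamp01 t)}"

definition C01_borel :: "(real, real) bcontfun measure" where
  "C01_borel = restrict_space borel C01"

text \<open>R^k as functions on {..<k} with the product (= Borel) sigma-algebra.\<close>
definition Rk :: "nat \<Rightarrow> (nat \<Rightarrow> real) measure" where
  "Rk k = PiM {..<k} (\<lambda>_. borel)"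

definition proj :: "nat \<Rightarrow> (nat \<Rightarrow> real) \<Rightarrow> (real, real) bcontfun \<Rightarrow> (nat \<Rightarrow> real)" where
  "proj k t f = (\<lambda>i\<in>{..<k}. apply_bcontfun f (t i))"

end

theory Submission
  imports Defs
begin

text \<open>
  Write \<open>\<mu>\<close> and \<open>\<nu>\<close> for the laws of \<open>X\<^sub>d\<close> and \<open>X\<^sub>d\<^sub>'\<close> on \<open>C([0,1])\<close>.
  The hypothesis says \<open>\<mu>(C) \<le> e\<^sup>\<epsilon> \<nu>(C) + \<delta>\<close> for every cylinder set
  \<open>C = {f. (f(t\<^sub>1),\<dots>,f(t\<^sub>k)) \<in> B}\<close>.  The cylinders form an algebra, and
  (1) every set of the \<sigma>-algebra generated by an algebra can be approximated in
      \<open>\<mu>\<close>- and \<open>\<nu>\<close>-measure simultaneously by sets of the algebra, so such an affine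
      inequality passes from the algebra to the generated \<sigma>-algebra;
  (2) the cylinders generate the Borel sets of \<open>C([0,1])\<close>: closed sup-norm balls are
      countable intersections of cylinders (evaluate at rational times), and \<open>C([0,1])\<close> is
      separable, so every open set is a countable union of closed balls.
\<close>

lemma measure_sym_diff_triangle:
  assumes "finite_measure M" and "A \<in> sets M" "B \<in> sets M" "C \<in> sets M"
  shows "measure M (sym_diff A C) \<le> measure M (sym_diff A B) + measure M (sym_diff B C)"
proof -
  interpret finite_measure M by fact
  have "measure M (sym_diff A C) \<le> measure M (sym_diff A B \<union> sym_diff B C)"
    using assms by (intro finite_measure_mono) auto
  also have "\<dots> \<le> measure M (sym_diff A B) + measure M (sym_diff B C)"
    using assms by (intro measure_Un_le) auto
  finally show ?thesis .
qed

lemma measure_sym_diff_Un_le: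
  assumes "finite_measure M" and "A \<in> sets M" "A' \<in> sets M" "C \<in> sets M" "C' \<in> sets M"
  shows "measure M (sym_diff (A \<union> A') (C \<union> C')) \<le> measure M (sym_diff A C) + measure M (sym_diff A' C')"
proof -
  interpret finite_measure M by fact
  have "measure M (sym_diff (A \<union> A') (C \<union> C')) \<le> measure M (sym_diff A C \<union> sym_diff A' C')"
    using assms by (intro finite_measure_mono) auto
  also have "\<dots> \<le> measure M (sym_diff A C) + measure M (sym_diff A' C')"
    using assms by (intro measure_Un_le) auto
  finally show ?thesis .
qed

text \<open>A countable union is approximated in measure by its finite partial unions
  (continuity of a finite measure from below).\<close>
lemma measure_sym_diff_partial_unions_tendsto:
  assumes "finite_measure M" and A: "\<And>k. A k \<in> sets M"
  shows "(\<lambda>n. measure M (sym_diff (\<Union>k. A k) (\<Union>k<n. A k))) \<longlonglongrightarrow> 0"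
proof -
  interpret finite_measure M by fact
  have partial: "(\<Union>k<n. A k) \<in> sets M" for n
    using A by auto
  have "(\<lambda>n. measure M (\<Union>k<n. A k)) \<longlonglongrightarrow> measure M (\<Union>n. \<Union>k<n. A k)"
    using partial by (intro finite_Lim_measure_incseq) (auto simp: incseq_def intro: less_le_trans)
  moreover have "(\<Union>n. \<Union>k<n. A k) = (\<Union>k. A k)"
    by blast
  ultimately have "(\<lambda>n. measure M (\<Union>k. A k) - measure M (\<Union>k<n. A k))
      \<longlonglongrightarrow> measure M (\<Union>k. A k) - measure M (\<Union>k. A k)"
    by (intro tendsto_diff tendsto_const) simp
  then have "(\<lambda>n. measure M (\<Union>k. A k) - measure M (\<Union>k<n. A k)) \<longlonglongrightarrow> 0"
    by simp
  moreover have "sym_diff (\<Union>k. A k) (\<Union>k<n. A k) = (\<Union>k. A k) - (\<Union>k<n. A k)" for n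
    by blast
  moreover have "measure M ((\<Union>k. A k) - (\<Union>k<n. A k)) = measure M (\<Union>k. A k) - measure M (\<Union>k<n. A k)" for n
    using A partial by (intro finite_measure_Diff) auto
  ultimately show ?thesis
    by simp
qed

text \<open>The approximable sets contain \<open>G\<close> and are
  closed under complements and countable unions, hence contain the generated \<sigma>-algebra.\<close>
locale finite_measures_on_generated =
  fixes \<Omega> :: "'a set" and G :: "'a set set" and M :: "'i \<Rightarrow> 'a measure" and I :: "'i set"
  assumes algebra_G: "algebra \<Omega> G" and finite_I: "finite I"
    and finite_M: "\<And>i. i \<in> I \<Longrightarrow> finite_measure (M i)"
    and sets_M: "\<And>i. i \<in> I \<Longrightarrow> sets (M i) = sigma_sets \<Omega> G"
begin

sublocale algebra \<Omega> G
  by (rule algebra_G)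

definition approximable :: "'a set \<Rightarrow> bool" where
  "approximable A \<longleftrightarrow> (\<forall>e>0. \<exists>C\<in>G. \<forall>i\<in>I. measure (M i) (sym_diff A C) < e)"

lemma generator_in_sets: "C \<in> G \<Longrightarrow> i \<in> I \<Longrightarrow> C \<in> sets (M i)"
  using sets_M by (auto intro: sigma_sets.Basic)

lemma approximable_generator: "C \<in> G \<Longrightarrow> approximable C"
  using finite_I by (auto simp: approximable_def intro!: bexI[of _ C])

lemma approximable_Compl:
  assumes "A \<in> sigma_sets \<Omega> G" "approximable A"
  shows "approximable (\<Omega> - A)"
  unfolding approximable_def
proof (intro allI impI)
  fix e :: real assume "e > 0"
  then obtain C where C: "C \<in> G" "\<forall>i\<in>I. measure (M i) (sym_diff A C) < e"
    using assms(2) by (auto simp: approximable_def)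
  have "A \<subseteq> \<Omega>" "C \<subseteq> \<Omega>"
    using assms(1) C(1) space_closed sigma_sets_into_sp by blast+
  then have "sym_diff (\<Omega> - A) (\<Omega> - C) = sym_diff A C"
    by blast
  then show "\<exists>C'\<in>G. \<forall>i\<in>I. measure (M i) (sym_diff (\<Omega> - A) C') < e"
    using C compl_sets by (intro bexI[of _ "\<Omega> - C"]) auto
qed

lemma approximable_Un:
  assumes "A \<in> sigma_sets \<Omega> G" "A' \<in> sigma_sets \<Omega> G" "approximable A" "approximable A'"
  shows "approximable (A \<union> A')"
  unfolding approximable_def
proof (intro allI impI)
  fix e :: real assume "e > 0"
  then obtain C C' where C: "C \<in> G" "\<forall>i\<in>I. measure (M i) (sym_diff A C) < e / 2"
    and C': "C' \<in> G" "\<forall>i\<in>I. measure (M i) (sym_diff A' C') < e / 2"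
    using assms(3,4) unfolding approximable_def by (meson half_gt_zero)
  have "measure (M i) (sym_diff (A \<union> A') (C \<union> C')) < e" if "i \<in> I" for i
    using measure_sym_diff_Un_le[OF finite_M[OF that], of A A' C C'] C C' that assms(1,2)
      generator_in_sets sets_M by fastforce
  then show "\<exists>C''\<in>G. \<forall>i\<in>I. measure (M i) (sym_diff (A \<union> A') C'') < e"
    using C(1) C'(1) Un by blast
qed

text \<open>The partial unions are approximable by induction; the tail of the union is small
  in all (finitely many) measures from some index on.\<close>
lemma approximable_UNION:
  fixes A :: "nat \<Rightarrow> 'a set"
  assumes A: "\<And>k. A k \<in> sigma_sets \<Omega> G" and approx: "\<And>k. approximable (A k)"
  shows "approximable (\<Union>k. A k)"
  unfolding approximable_def
proof (intro allI impI)
  fix e :: real assume e: "e > 0"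
  have partial_sets: "(\<Union>k<n. A k) \<in> sigma_sets \<Omega> G" for n
    using A by (intro sigma_sets_UNION) auto
  have partial_approx: "approximable (\<Union>k<n. A k)" for n
  proof (induction n)
    case 0
    then show ?case
      using approximable_generator empty_sets by simp
  next
    case (Suc n)
    then show ?case
      using approximable_Un[OF partial_sets A Suc approx] by (simp add: lessThan_Suc Un_commute)
  qed
  have tail: "\<forall>\<^sub>F n in sequentially. measure (M i) (sym_diff (\<Union>k. A k) (\<Union>k<n. A k)) < e / 2"
    if i: "i \<in> I" for i
  proof -
    have "(\<lambda>n. measure (M i) (sym_diff (\<Union>k. A k) (\<Union>k<n. A k))) \<longlonglongrightarrow> 0"
      using A sets_M[OF i] by (intro measure_sym_diff_partial_unions_tendsto[OF finite_M[OF i]]) auto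
    then show ?thesis
      by (rule order_tendstoD(2)) (use e in simp)
  qed
  then have "\<forall>\<^sub>F n in sequentially. \<forall>i\<in>I. measure (M i) (sym_diff (\<Union>k. A k) (\<Union>k<n. A k)) < e / 2"
    by (intro eventually_ball_finite finite_I ballI)
  then obtain N where N: "\<forall>i\<in>I. measure (M i) (sym_diff (\<Union>k. A k) (\<Union>k<N. A k)) < e / 2"
    unfolding eventually_sequentially by blast
  obtain C where C: "C \<in> G" "\<forall>i\<in>I. measure (M i) (sym_diff (\<Union>k<N. A k) C) < e / 2"
    using partial_approx[of N] e unfolding approximable_def by (meson half_gt_zero)
  have "measure (M i) (sym_diff (\<Union>k. A k) C) < e" if i: "i \<in> I" for i
  proof -
    have "(\<Union>k. A k) \<in> sets (M i)" "(\<Union>k<N. A k) \<in> sets (M i)" "C \<in> sets (M i)"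
      using sets_M[OF i] A partial_sets generator_in_sets[OF C(1) i] by (auto intro: sigma_sets.Union)
    from measure_sym_diff_triangle[OF finite_M[OF i] this]
    show ?thesis
      using N[rule_format, OF i] C(2)[rule_format, OF i] by linarith
  qed
  then show "\<exists>C\<in>G. \<forall>i\<in>I. measure (M i) (sym_diff (\<Union>k. A k) C) < e"
    using C(1) by blast
qed

lemma approximable_sigma_sets: "A \<in> sigma_sets \<Omega> G \<Longrightarrow> approximable A"
proof (induction rule: sigma_sets.induct)
  case (Basic a)
  then show ?case by (rule approximable_generator)
next
  case Empty
  then show ?case using approximable_generator empty_sets by blast
next
  case (Compl a)
  then show ?case by (rule approximable_Compl)
next
  case (Union a)
  then show ?case by (rule approximable_UNION)
qed

end

text \<open>An affine bound \<open>\<mu>(C) \<le> a \<nu>(C) + b\<close> valid on an algebra extends to the generated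
  \<sigma>-algebra: approximate \<open>A\<close> by a set \<open>C\<close> of the algebra in both measures (indexed by \<open>bool\<close>)
  and let the approximation error tend to \<open>0\<close>.\<close>
lemma affine_bound_extends_to_sigma_sets:
  fixes \<mu> \<nu> :: "'a measure" and a b :: real
  assumes algebra: "algebra \<Omega> G"
    and fin: "finite_measure \<mu>" "finite_measure \<nu>"
    and sets: "sets \<mu> = sigma_sets \<Omega> G" "sets \<nu> = sigma_sets \<Omega> G"
    and a: "a \<ge> 0" and bound: "\<And>C. C \<in> G \<Longrightarrow> measure \<mu> C \<le> a * measure \<nu> C + b"
    and A: "A \<in> sigma_sets \<Omega> G"
  shows "measure \<mu> A \<le> a * measure \<nu> A + b"
proof -
  interpret finite_measures_on_generated \<Omega> G "\<lambda>i. if i then \<mu> else \<nu>" UNIV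
    by (intro finite_measures_on_generated.intro) (simp_all add: algebra fin sets)
  interpret \<mu>: finite_measure \<mu> by (rule fin(1))
  interpret \<nu>: finite_measure \<nu> by (rule fin(2))
  show ?thesis
  proof (rule field_le_epsilon)
    fix e :: real assume e: "e > 0"
    define e' where "e' = e / (a + 1)"
    have e': "e' > 0" "e' * (a + 1) = e"
      using e a by (auto simp: e'_def)
    have "approximable A"
      by (rule approximable_sigma_sets[OF A])
    from this[unfolded approximable_def, rule_format, OF e'(1)]
    obtain C where C: "C \<in> G" and close: "\<forall>i\<in>UNIV. measure (if i then \<mu> else \<nu>) (sym_diff A C) < e'"
      by blast
    have close_\<mu>: "measure \<mu> (sym_diff A C) < e'" and close_\<nu>: "measure \<nu> (sym_diff A C) < e'"
      using close[rule_format, of True] close[rule_format, of False] by simp_all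
    have in_sets: "A \<in> sets \<mu>" "C \<in> sets \<mu>" "A \<in> sets \<nu>" "C \<in> sets \<nu>"
      using A C sets by (auto intro: sigma_sets.Basic)
    have "measure \<mu> A \<le> measure \<mu> (C \<union> sym_diff A C)"
      using in_sets by (intro \<mu>.finite_measure_mono) auto
    also have "\<dots> \<le> measure \<mu> C + measure \<mu> (sym_diff A C)"
      using in_sets by (intro measure_Un_le) auto
    finally have \<mu>_A: "measure \<mu> A \<le> measure \<mu> C + e'"
      using close_\<mu> by linarith
    have "measure \<nu> C \<le> measure \<nu> (A \<union> sym_diff A C)"
      using in_sets by (intro \<nu>.finite_measure_mono) auto
    also have "\<dots> \<le> measure \<nu> A + measure \<nu> (sym_diff A C)"
      using in_sets by (intro measure_Un_le) auto
    finally have "measure \<nu> C \<le> measure \<nu> A + e'"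
      using close_\<nu> by linarith
    then have "a * measure \<nu> C \<le> a * measure \<nu> A + a * e'"
      using a by (metis distrib_left mult_left_mono)
    then show "measure \<mu> A \<le> a * measure \<nu> A + b + e"
      using \<mu>_A bound[OF C] e'(2) by (simp add: algebra_simps)
  qed
qed

lemma clamp01_mem: "clamp01 t \<in> {0..1}"
  by (auto simp: clamp01_def)

lemma C01_eq_clamp: "f \<in> C01 \<Longrightarrow> apply_bcontfun f t = apply_bcontfun f (clamp01 t)"
  by (auto simp: C01_def)

lemma space_C01_borel: "space C01_borel = C01"
  by (simp add: C01_borel_def space_restrict_space)

definition cylinders :: "(real, real) bcontfun set set" where
  "cylinders = {C01 \<inter> {f. restrict (apply_bcontfun f) T \<in> B} | T B.
      finite T \<and> T \<noteq> {} \<and> T \<subseteq> {0..1} \<and> B \<in> sets (PiM T (\<lambda>_. borel :: real measure))}"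

text \<open>Evaluation at finitely many times is Borel measurable, each evaluation being continuous
  for the sup norm.\<close>
lemma restrict_bcontfun_measurable:
  "(\<lambda>f. restrict (apply_bcontfun f) T) \<in> measurable C01_borel (PiM T (\<lambda>_. borel :: real measure))"
proof (rule measurable_restrict)
  fix t
  have "continuous_on UNIV (\<lambda>f::(real, real) bcontfun. apply_bcontfun f t)"
    unfolding continuous_on_iff by (metis dist_fun_lt_imp_dist_val_lt)
  then show "(\<lambda>f. apply_bcontfun f t) \<in> borel_measurable C01_borel"
    unfolding C01_borel_def by (intro measurable_restrict_space1 borel_measurable_continuous_onI)
qed

lemma cylinders_subset_sets: "cylinders \<subseteq> sets C01_borel"
proof
  fix C assume "C \<in> cylinders"
  then obtain T B where C: "C = C01 \<inter> {f. restrict (apply_bcontfun f) T \<in> B}"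
    and B: "B \<in> sets (PiM T (\<lambda>_. borel :: real measure))"
    unfolding cylinders_def by blast
  have "(\<lambda>f. restrict (apply_bcontfun f) T) -` B \<inter> space C01_borel \<in> sets C01_borel"
    by (rule measurable_sets[OF restrict_bcontfun_measurable B])
  then show "C \<in> sets C01_borel"
    unfolding C space_C01_borel by (simp add: Int_commute vimage_def Collect_conj_eq)
qed

text \<open>The cylinders form an algebra on \<open>C([0,1])\<close>: complements change only the Borel set,
  and two cylinders can be written over the union of their sets of times.\<close>
lemma cylinders_algebra: "algebra C01 cylinders"
  unfolding algebra_iff_Un
proof (intro conjI ballI)
  show "cylinders \<subseteq> Pow C01"
    unfolding cylinders_def by auto
  show "{} \<in> cylinders"
    unfolding cylinders_def by (rule CollectI, rule exI[of _ "{0}"], rule exI[of _ "{}"]) auto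
next
  fix C assume "C \<in> cylinders"
  then obtain T B where C: "C = C01 \<inter> {f. restrict (apply_bcontfun f) T \<in> B}"
    and B: "B \<in> sets (PiM T (\<lambda>_. borel :: real measure))" and T: "finite T" "T \<noteq> {}" "T \<subseteq> {0..1}"
    unfolding cylinders_def by blast
  have "C01 - C = C01 \<inter> {f. restrict (apply_bcontfun f) T \<in> space (PiM T (\<lambda>_. borel)) - B}"
    unfolding C by (auto simp: space_PiM)
  then show "C01 - C \<in> cylinders"
    unfolding cylinders_def using T B by blast
next
  fix C C' assume "C \<in> cylinders" "C' \<in> cylinders"
  then obtain T B T' B' where C: "C = C01 \<inter> {f. restrict (apply_bcontfun f) T \<in> B}"
    and B: "B \<in> sets (PiM T (\<lambda>_. borel :: real measure))" and T: "finite T" "T \<noteq> {}" "T \<subseteq> {0..1}"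
    and C': "C' = C01 \<inter> {f. restrict (apply_bcontfun f) T' \<in> B'}"
    and B': "B' \<in> sets (PiM T' (\<lambda>_. borel :: real measure))" and T': "finite T'" "T' \<noteq> {}" "T' \<subseteq> {0..1}"
    unfolding cylinders_def by blast
  define U where "U = T \<union> T'"
  define B'' where "B'' = ((\<lambda>y. restrict y T) -` B \<inter> space (PiM U (\<lambda>_. borel :: real measure)))
      \<union> ((\<lambda>y. restrict y T') -` B' \<inter> space (PiM U (\<lambda>_. borel :: real measure)))"
  have "B'' \<in> sets (PiM U (\<lambda>_. borel :: real measure))"
    unfolding B''_def U_def
    by (intro sets.Un measurable_sets[OF measurable_restrict_subset B]
        measurable_sets[OF measurable_restrict_subset B']) auto
  moreover have "C \<union> C' = C01 \<inter> {f. restrict (apply_bcontfun f) U \<in> B''}"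
    unfolding C C' B''_def U_def by (auto simp: space_PiM restrict_restrict Int_absorb1 Int_absorb2)
  ultimately show "C \<union> C' \<in> cylinders"
    unfolding cylinders_def U_def using T T' by blast
qed

lemma closure_Rats_unit_interval: "closure (\<rat> \<inter> {0..1}) = {0..(1::real)}"
proof
  show "closure (\<rat> \<inter> {0..1}) \<subseteq> {0..(1::real)}"
    by (rule closure_minimal) auto
  have "{0<..<1} \<subseteq> closure ({0<..<1::real} \<inter> \<rat>)"
    using open_Int_closure_subset[of "{0<..<1::real}" \<rat>] by (simp add: Rats_closure_real)
  also have "\<dots> \<subseteq> closure (\<rat> \<inter> {0..1})"
    by (intro closure_mono) auto
  finally have "closure {0<..<1::real} \<subseteq> closure (\<rat> \<inter> {0..1})"
    by (rule closure_minimal[OF _ closed_closure])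
  then show "{0..1} \<subseteq> closure (\<rat> \<inter> {0..(1::real)})"
    by simp
qed

text \<open>A closed sup-norm ball of \<open>C([0,1])\<close> is the countable intersection of the one-point
  cylinders \<open>{g. \<bar>g q - c q\<bar> \<le> r}\<close>, \<open>q\<close> rational in \<open>[0,1]\<close>, by continuity.\<close>
lemma closed_ball_in_sigma_cylinders:
  assumes c: "c \<in> C01"
  shows "{g \<in> C01. dist g c \<le> r} \<in> sigma_sets C01 cylinders"
proof -
  interpret sigma_algebra C01 "sigma_sets C01 cylinders"
    using cylinders_algebra by (intro sigma_algebra_sigma_sets) (simp add: algebra_iff_Un)
  define Q where "Q = \<rat> \<inter> {0..(1::real)}"
  define E where "E q = C01 \<inter> {g. restrict (apply_bcontfun g) {q} \<in>
      (\<lambda>y. y q) -` cball (apply_bcontfun c q) r \<inter> space (PiM {q} (\<lambda>_. borel :: real measure))}" for q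
  have E_cylinder: "E q \<in> cylinders" if "q \<in> Q" for q
  proof -
    have "(\<lambda>y. y q) -` cball (apply_bcontfun c q) r \<inter> space (PiM {q} (\<lambda>_. borel :: real measure))
        \<in> sets (PiM {q} (\<lambda>_. borel :: real measure))"
      by (rule measurable_sets[OF measurable_component_singleton]) auto
    then show ?thesis
      unfolding cylinders_def E_def using that Q_def by blast
  qed
  have E_eq: "E q = {g \<in> C01. dist (apply_bcontfun g q) (apply_bcontfun c q) \<le> r}" for q
    unfolding E_def by (auto simp: space_PiM dist_commute)
  have "0 \<in> Q"
    unfolding Q_def by simp
  have "{g \<in> C01. dist g c \<le> r} = (\<Inter>q\<in>Q. E q)"
  proof (intro equalityI subsetI)
    fix g assume "g \<in> {g \<in> C01. dist g c \<le> r}"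
    then show "g \<in> (\<Inter>q\<in>Q. E q)"
      unfolding E_eq using dist_bounded order_trans by blast
  next
    fix g assume g: "g \<in> (\<Inter>q\<in>Q. E q)"
    have g_C01: "g \<in> C01"
      using g \<open>0 \<in> Q\<close> unfolding E_eq by blast
    have "dist (apply_bcontfun g t) (apply_bcontfun c t) \<le> r" if t: "t \<in> {0..1}" for t
    proof (rule continuous_le_on_closure[where S = Q
        and f = "\<lambda>t. dist (apply_bcontfun g t) (apply_bcontfun c t)"])
      show "continuous_on (closure Q) (\<lambda>t. dist (apply_bcontfun g t) (apply_bcontfun c t))"
        by (intro continuous_on_dist) simp_all
      show "t \<in> closure Q"
        using t closure_Rats_unit_interval unfolding Q_def by simp
      show "dist (apply_bcontfun g q) (apply_bcontfun c q) \<le> r" if "q \<in> Q" for q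
        using g that unfolding E_eq by blast
    qed
    then have "dist (apply_bcontfun g t) (apply_bcontfun c t) \<le> r" for t
      using C01_eq_clamp[OF g_C01, of t] C01_eq_clamp[OF c, of t] clamp01_mem[of t] by metis
    then show "g \<in> {g \<in> C01. dist g c \<le> r}"
      using g_C01 dist_bound by blast
  qed
  moreover have "countable Q"
    unfolding Q_def by (rule countable_subset[OF _ countable_rat]) auto
  moreover have "E ` Q \<subseteq> sigma_sets C01 cylinders"
    using E_cylinder by (auto intro: sigma_sets.Basic)
  ultimately show ?thesis
    using \<open>0 \<in> Q\<close> by (auto intro: countable_INT')
qed

text \<open>A subset \<open>S\<close> of a metric space has a countable dense subset as soon as, for every
  \<open>e > 0\<close>, each point of \<open>S\<close> lies in one of countably many cells, of which all points are
  \<open>e\<close>-close to it: choose one point in every non-empty cell.\<close>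
lemma countable_dense_subset_from_cells:
  fixes cell :: "'i::countable \<Rightarrow> 'x::metric_space set"
  assumes cell_subset: "\<And>i. cell i \<subseteq> S"
    and fine: "\<And>g (e::real). g \<in> S \<Longrightarrow> e > 0 \<Longrightarrow> \<exists>i. g \<in> cell i \<and> (\<forall>f\<in>cell i. dist f g < e)"
  obtains Dn where "countable Dn" "Dn \<subseteq> S" "\<And>g (e::real). g \<in> S \<Longrightarrow> e > 0 \<Longrightarrow> \<exists>c\<in>Dn. dist c g < e"
proof
  define Dn where "Dn = (\<lambda>i. SOME f. f \<in> cell i) ` {i. cell i \<noteq> {}}"
  have representative: "(SOME f. f \<in> cell i) \<in> cell i" if "cell i \<noteq> {}" for i
    using that by (simp add: some_in_eq)
  show "countable Dn"
    unfolding Dn_def by (rule countable_image) (rule countableI_type)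
  show "Dn \<subseteq> S"
    unfolding Dn_def using representative cell_subset by blast
  fix g and e :: real
  assume "g \<in> S" "e > 0"
  then obtain i where "g \<in> cell i" "\<forall>f\<in>cell i. dist f g < e"
    using fine by blast
  then show "\<exists>c\<in>Dn. dist c g < e"
    unfolding Dn_def using representative by blast
qed

text \<open>If \<open>Dn\<close> is countable and dense in \<open>S\<close>, every \<sigma>-algebra on \<open>S\<close> containing the closed balls
  of \<open>S\<close> centred in \<open>Dn\<close> contains the traces on \<open>S\<close> of all open sets: an open set is the union
  of the balls with centre in \<open>Dn\<close> and rational radius that it contains.\<close>
lemma open_Int_in_sigma_of_closed_balls:
  fixes S :: "'x::metric_space set"
  assumes sigma: "sigma_algebra S \<Sigma>" and "countable Dn"
    and dense: "\<And>g (e::real). g \<in> S \<Longrightarrow> e > 0 \<Longrightarrow> \<exists>c\<in>Dn. dist c g < e"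
    and balls: "\<And>c r. c \<in> Dn \<Longrightarrow> {g \<in> S. dist g c \<le> r} \<in> \<Sigma>"
    and U: "open U"
  shows "U \<inter> S \<in> \<Sigma>"
proof -
  interpret sigma_algebra S \<Sigma> by (rule sigma)
  define ball_S where "ball_S p = {g \<in> S. dist g (fst p) \<le> snd p}" for p :: "'x \<times> real"
  define I where "I = {p \<in> Dn \<times> \<rat>. ball_S p \<subseteq> U}"
  have "U \<inter> S = (\<Union>p\<in>I. ball_S p)"
  proof (intro equalityI subsetI)
    fix g assume g: "g \<in> U \<inter> S"
    then obtain e where e: "e > 0" "\<And>y. dist y g < e \<Longrightarrow> y \<in> U"
      using U unfolding open_dist by blast
    obtain c where c: "c \<in> Dn" "dist c g < e / 3"
      using dense[of g "e / 3"] g e by auto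
    obtain r where r: "r \<in> \<rat>" "e / 3 < r" "r < 2 * e / 3"
      using Rats_dense_in_real[of "e / 3" "2 * e / 3"] e by auto
    have "ball_S (c, r) \<subseteq> U"
    proof
      fix y assume "y \<in> ball_S (c, r)"
      then have "dist y c \<le> r"
        unfolding ball_S_def by simp
      then have "dist y g < e"
        using c(2) r dist_triangle[of y g c] by linarith
      then show "y \<in> U"
        using e by blast
    qed
    moreover have "g \<in> ball_S (c, r)"
      unfolding ball_S_def using g c(2) r by (auto simp: dist_commute)
    ultimately show "g \<in> (\<Union>p\<in>I. ball_S p)"
      unfolding I_def using c r by auto
  qed (auto simp: I_def ball_S_def)
  moreover have "countable (Dn \<times> \<rat>)"
    using \<open>countable Dn\<close> countable_rat by (rule countable_SIGMA)
  then have "countable I"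
    unfolding I_def by (rule countable_subset[rotated]) auto
  moreover have "ball_S ` I \<subseteq> \<Sigma>"
    unfolding I_def ball_S_def using balls by auto
  ultimately show ?thesis
    by (simp add: countable_UN')
qed

lemma floor_scaled_approx:
  fixes m z :: real
  assumes "m > 0"
  shows "real_of_int \<lfloor>m * z\<rfloor> / m \<le> z" "z - real_of_int \<lfloor>m * z\<rfloor> / m < 1 / m"
proof -
  have floor: "real_of_int \<lfloor>m * z\<rfloor> \<le> m * z" "m * z - real_of_int \<lfloor>m * z\<rfloor> < 1"
    by linarith+
  then show "real_of_int \<lfloor>m * z\<rfloor> / m \<le> z"
    using assms by (simp add: pos_divide_le_eq mult.commute)
  have "z - real_of_int \<lfloor>m * z\<rfloor> / m = (m * z - real_of_int \<lfloor>m * z\<rfloor>) / m"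
    using assms by (simp add: field_simps)
  also have "\<dots> < 1 / m"
    using assms floor(2) by (rule divide_strict_right_mono[rotated])
  finally show "z - real_of_int \<lfloor>m * z\<rfloor> / m < 1 / m" .
qed

lemma grid_point_near:
  fixes y :: real
  assumes y: "y \<in> {0..1}"
  shows "\<exists>j\<le>N. \<bar>y - real j / (real N + 1)\<bar> \<le> 1 / (real N + 1)"
proof (cases "y = 1")
  case True
  then show ?thesis
    by (intro exI[of _ N]) (auto simp: field_simps)
next
  case False
  define m where "m = real N + 1"
  have m: "m > 0"
    unfolding m_def by simp
  define j where "j = nat \<lfloor>m * y\<rfloor>"
  have j: "real j = real_of_int \<lfloor>m * y\<rfloor>"
    unfolding j_def using y m by simp
  have "m * y < m"
    using y False m by simp
  then have "j \<le> N"
    unfolding j_def m_def by linarith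
  moreover have "\<bar>y - real j / m\<bar> \<le> 1 / m"
    using floor_scaled_approx[OF m, of y] unfolding j by linarith
  ultimately show ?thesis
    unfolding m_def by blast
qed

text \<open>There are countably many cells.\<close>
definition grid_cell :: "nat \<Rightarrow> nat \<Rightarrow> int list \<Rightarrow> (real, real) bcontfun set" where
  "grid_cell N M v = {f \<in> C01.
     (\<forall>j\<le>N. \<bar>apply_bcontfun f (real j / (real N + 1)) - real_of_int (v ! j) / (real N + 1)\<bar>
        \<le> 1 / (real N + 1)) \<and>
     (\<forall>s\<in>{0..1}. \<forall>t\<in>{0..1}. \<bar>s - t\<bar> \<le> 1 / (real N + 1) \<longrightarrow>
        \<bar>apply_bcontfun f s - apply_bcontfun f t\<bar> \<le> 1 / (real M + 1))}"

text \<open>Cells are small: two functions of the same cell agree up to \<open>2/(M+1) + 2/(N+1)\<close>,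
  comparing both with \<open>v!j/(N+1)\<close> at the grid point nearest to each time.\<close>
lemma grid_cell_dist:
  assumes f: "f \<in> grid_cell N M v" and g: "g \<in> grid_cell N M v"
  shows "dist f g \<le> 2 / (real M + 1) + 2 / (real N + 1)"
proof (rule dist_bound)
  fix x
  define y where "y = clamp01 x"
  have y: "y \<in> {0..1}"
    unfolding y_def by (rule clamp01_mem)
  obtain j where j: "j \<le> N" "\<bar>y - real j / (real N + 1)\<bar> \<le> 1 / (real N + 1)"
    using grid_point_near[OF y] by blast
  define p where "p = real j / (real N + 1)"
  have p: "p \<in> {0..1}"
    unfolding p_def using j(1) by (auto simp: field_simps)
  have near: "\<bar>apply_bcontfun h y - real_of_int (v ! j) / (real N + 1)\<bar>
      \<le> 1 / (real M + 1) + 1 / (real N + 1)" if "h \<in> grid_cell N M v" for h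
  proof -
    have "\<bar>apply_bcontfun h y - apply_bcontfun h p\<bar> \<le> 1 / (real M + 1)"
      using that y p j(2) unfolding grid_cell_def p_def by auto
    moreover have "\<bar>apply_bcontfun h p - real_of_int (v ! j) / (real N + 1)\<bar> \<le> 1 / (real N + 1)"
      using that j(1) unfolding grid_cell_def p_def by auto
    ultimately show ?thesis
      by linarith
  qed
  have "f \<in> C01" "g \<in> C01"
    using f g by (auto simp: grid_cell_def)
  then have "dist (apply_bcontfun f x) (apply_bcontfun g x) = \<bar>apply_bcontfun f y - apply_bcontfun g y\<bar>"
    unfolding y_def dist_real_def using C01_eq_clamp by metis
  also have "\<dots> \<le> 2 / (real M + 1) + 2 / (real N + 1)"
    using near[OF f] near[OF g] by linarith
  finally show "dist (apply_bcontfun f x) (apply_bcontfun g x) \<le> 2 / (real M + 1) + 2 / (real N + 1)" .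
qed

text \<open>By uniform continuity every function of \<open>C([0,1])\<close> lies in cells of arbitrarily fine grids.\<close>
lemma grid_cell_cover:
  assumes g: "g \<in> C01"
  shows "\<exists>N0. \<forall>N\<ge>N0. \<exists>v. g \<in> grid_cell N M v"
proof -
  have "uniformly_continuous_on {0..1} (apply_bcontfun g)"
    by (intro compact_uniformly_continuous continuous_on_apply_bcontfun) simp
  moreover have "1 / (real M + 1) > 0"
    by simp
  ultimately obtain d where d: "d > 0" "\<forall>s\<in>{0..1}. \<forall>t\<in>{0..1}. dist t s < d \<longrightarrow>
      dist (apply_bcontfun g t) (apply_bcontfun g s) < 1 / (real M + 1)"
    unfolding uniformly_continuous_on_def by metis
  obtain N0 :: nat where N0: "1 / (real N0 + 1) < d"
    using reals_Archimedean[OF d(1)] by (auto simp: inverse_eq_divide add.commute)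
  have "\<exists>v. g \<in> grid_cell N M v" if N: "N \<ge> N0" for N
  proof
    define m where "m = real N + 1"
    have m: "m > 0"
      unfolding m_def by simp
    have "1 / m \<le> 1 / (real N0 + 1)"
      unfolding m_def using N by (simp add: frac_le)
    then have md: "1 / m < d"
      using N0 by linarith
    define v where "v = map (\<lambda>j. \<lfloor>m * apply_bcontfun g (real j / m)\<rfloor>) [0..<N+1]"
    show "g \<in> grid_cell N M v"
      unfolding grid_cell_def
    proof (intro CollectI conjI allI impI ballI g)
      fix j assume "j \<le> N"
      then have "v ! j = \<lfloor>m * apply_bcontfun g (real j / m)\<rfloor>"
        unfolding v_def by (simp del: upt_Suc)
      then show "\<bar>apply_bcontfun g (real j / (real N + 1)) - real_of_int (v ! j) / (real N + 1)\<bar>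
          \<le> 1 / (real N + 1)"
        using floor_scaled_approx[OF m, of "apply_bcontfun g (real j / m)"] unfolding m_def by simp
    next
      fix s t :: real assume st: "s \<in> {0..1}" "t \<in> {0..1}" "\<bar>s - t\<bar> \<le> 1 / (real N + 1)"
      then have "dist s t < d"
        using md unfolding m_def dist_real_def by linarith
      then show "\<bar>apply_bcontfun g s - apply_bcontfun g t\<bar> \<le> 1 / (real M + 1)"
        using d(2) st unfolding dist_real_def by (metis less_imp_le)
    qed
  qed
  then show ?thesis
    by blast
qed

lemma C01_countable_dense:
  obtains Dn where "countable Dn" "Dn \<subseteq> C01" "\<And>g (e::real). g \<in> C01 \<Longrightarrow> e > 0 \<Longrightarrow> \<exists>c\<in>Dn. dist c g < e"
proof (rule countable_dense_subset_from_cells[where cell = "\<lambda>(N, M, v). grid_cell N M v"])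
  show "(case i of (N, M, v) \<Rightarrow> grid_cell N M v) \<subseteq> C01" for i
    by (auto simp: grid_cell_def split: prod.splits)
next
  fix g and e :: real
  assume g: "g \<in> C01" and e: "e > 0"
  obtain M :: nat where M: "1 / (real M + 1) < e / 4"
    using reals_Archimedean[of "e / 4"] e by (auto simp: inverse_eq_divide add.commute)
  obtain N0 where N0: "\<forall>N\<ge>N0. \<exists>v. g \<in> grid_cell N M v"
    using grid_cell_cover[OF g] by blast
  obtain N1 :: nat where N1: "1 / (real N1 + 1) < e / 4"
    using reals_Archimedean[of "e / 4"] e by (auto simp: inverse_eq_divide add.commute)
  define N where "N = max N0 N1"
  obtain v where v: "g \<in> grid_cell N M v"
    using N0 unfolding N_def by (meson max.cobounded1)
  have "1 / (real N + 1) \<le> 1 / (real N1 + 1)"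
    unfolding N_def by (simp add: frac_le)
  moreover have "2 / (real M + 1) = 2 * (1 / (real M + 1))" "2 / (real N + 1) = 2 * (1 / (real N + 1))"
    by simp_all
  ultimately have small: "2 / (real M + 1) + 2 / (real N + 1) < e"
    using M N1 by linarith
  have "\<forall>f\<in>grid_cell N M v. dist f g < e"
    using grid_cell_dist[OF _ v] small by (auto intro: le_less_trans)
  then show "\<exists>i. g \<in> (case i of (N, M, v) \<Rightarrow> grid_cell N M v) \<and>
      (\<forall>f\<in>(case i of (N, M, v) \<Rightarrow> grid_cell N M v). dist f g < e)"
    using v by (intro exI[of _ "(N, M, v)"]) simp
qed blast

lemma sets_C01_borel_eq_sigma_cylinders: "sets C01_borel = sigma_sets C01 cylinders"
proof
  show "sigma_sets C01 cylinders \<subseteq> sets C01_borel"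
    using sets.sigma_sets_subset[OF cylinders_subset_sets] space_C01_borel by simp
next
  have cylinders_Pow: "cylinders \<subseteq> Pow C01"
    using cylinders_algebra by (simp add: algebra_iff_Un)
  obtain Dn where Dn: "countable Dn" "Dn \<subseteq> C01" "\<And>g (e::real). g \<in> C01 \<Longrightarrow> e > 0 \<Longrightarrow> \<exists>c\<in>Dn. dist c g < e"
    using C01_countable_dense by blast
  have open_trace: "U \<inter> C01 \<in> sigma_sets C01 cylinders" if "open U" for U
  proof (rule open_Int_in_sigma_of_closed_balls[OF sigma_algebra_sigma_sets[OF cylinders_Pow] Dn(1)])
    show "\<And>c r. c \<in> Dn \<Longrightarrow> {g \<in> C01. dist g c \<le> r} \<in> sigma_sets C01 cylinders"
      using Dn(2) closed_ball_in_sigma_cylinders by blast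
  qed (use Dn(3) that in auto)
  have identity_measurable: "(\<lambda>f. f) \<in> borel_measurable (sigma C01 cylinders)"
    using open_trace by (intro borel_measurableI) (simp add: cylinders_Pow Int_commute)
  show "sets C01_borel \<subseteq> sigma_sets C01 cylinders"
  proof
    fix A assume "A \<in> sets C01_borel"
    then obtain B where B: "B \<in> sets borel" "A = C01 \<inter> B"
      unfolding C01_borel_def sets_restrict_space by auto
    from measurable_sets[OF identity_measurable B(1)]
    show "A \<in> sigma_sets C01 cylinders"
      using B(2) cylinders_Pow by (simp add: space_measure_of_conv sets_measure_of Int_commute)
  qed
qed

text \<open>Every cylinder is the preimage of a Borel set of \<open>\<real>\<^sup>k\<close> under a projection
  \<open>\<pi>\<^bsub>t\<^sub>1,\<dots>,t\<^sub>k\<^esub>\<close> with strictly increasing times: list the times of the cylinder in increasing order.\<close>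
lemma cylinder_eq_proj_preimage:
  assumes "C \<in> cylinders"
  obtains k t B where "k \<ge> 1" "\<forall>i<k. t i \<in> {0..1}" "\<forall>i j. i < j \<longrightarrow> j < k \<longrightarrow> t i < t j"
    "B \<in> sets (Rk k)" "C = {f \<in> C01. proj k t f \<in> B}"
proof -
  obtain T B where C: "C = C01 \<inter> {f. restrict (apply_bcontfun f) T \<in> B}"
    and T: "finite T" "T \<noteq> {}" "T \<subseteq> {0..1}" and B: "B \<in> sets (PiM T (\<lambda>_. borel :: real measure))"
    using assms unfolding cylinders_def by blast
  define s where "s = sorted_list_of_set T"
  define k where "k = length s"
  have set_s: "set s = T"
    unfolding s_def using T by simp
  have k: "k \<ge> 1"
    unfolding k_def using set_s T(2) by (cases s) auto
  have times: "\<forall>i<k. s ! i \<in> {0..1}"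
    unfolding k_def using set_s T(3) nth_mem by blast
  have increasing: "\<forall>i j. i < j \<longrightarrow> j < k \<longrightarrow> s ! i < s ! j"
    using sorted_list_of_set.strict_sorted_key_list_of_set[of T] unfolding k_def s_def
    by (simp add: sorted_wrt_iff_nth_less)
  define idx where "idx x = (SOME i. i < k \<and> s ! i = x)" for x
  have idx: "idx x < k \<and> s ! idx x = x" if "x \<in> T" for x
  proof -
    have "\<exists>i. i < k \<and> s ! i = x"
      using that set_s unfolding k_def by (auto simp: in_set_conv_nth)
    then show ?thesis
      unfolding idx_def by (rule someI_ex)
  qed
  define reindex where "reindex y = restrict (\<lambda>x. y (idx x)) T" for y :: "nat \<Rightarrow> real"
  have "reindex \<in> measurable (Rk k) (PiM T (\<lambda>_. borel :: real measure))"
    unfolding reindex_def Rk_def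
    by (rule measurable_restrict, rule measurable_component_singleton) (use idx in auto)
  then have B_sets: "reindex -` B \<inter> space (Rk k) \<in> sets (Rk k)"
    using B by (rule measurable_sets)
  have C_eq: "C = {f \<in> C01. proj k (\<lambda>i. s ! i) f \<in> reindex -` B \<inter> space (Rk k)}"
  proof -
    have "reindex (proj k (\<lambda>i. s ! i) f) = restrict (apply_bcontfun f) T" for f
      unfolding reindex_def proj_def using idx by (auto intro!: ext)
    moreover have "proj k (\<lambda>i. s ! i) f \<in> space (Rk k)" for f
      unfolding Rk_def proj_def by (simp add: space_PiM)
    ultimately show ?thesis
      unfolding C by auto
  qed
  show ?thesis
    by (rule that[OF k times increasing B_sets C_eq])
qed

lemma cylinder_event_bound:
  assumes Y: "Y \<in> measurable P C01_borel" and Y': "Y' \<in> measurable P C01_borel"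
    and fdd: "\<And>k t B. k \<ge> 1 \<Longrightarrow> (\<forall>i<k. t i \<in> {0..1}) \<Longrightarrow> (\<forall>i j. i < j \<longrightarrow> j < k \<longrightarrow> t i < t j) \<Longrightarrow>
       B \<in> sets (Rk k) \<Longrightarrow>
       measure P {\<omega> \<in> space P. proj k t (Y \<omega>) \<in> B}
         \<le> a * measure P {\<omega> \<in> space P. proj k t (Y' \<omega>) \<in> B} + b"
    and C_cylinder: "C \<in> cylinders"
  shows "measure P {\<omega> \<in> space P. Y \<omega> \<in> C} \<le> a * measure P {\<omega> \<in> space P. Y' \<omega> \<in> C} + b"
proof -
  obtain k t B where fdd_hyps: "k \<ge> 1" "\<forall>i<k. t i \<in> {0..1}" "\<forall>i j. i < j \<longrightarrow> j < k \<longrightarrow> t i < t j"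
    "B \<in> sets (Rk k)" and C: "C = {f \<in> C01. proj k t f \<in> B}"
    using cylinder_eq_proj_preimage[OF C_cylinder] by blast
  have events: "{\<omega> \<in> space P. Z \<omega> \<in> C} = {\<omega> \<in> space P. proj k t (Z \<omega>) \<in> B}"
    if "Z \<in> measurable P C01_borel" for Z
    using measurable_space[OF that] unfolding C space_C01_borel by auto
  show ?thesis
    unfolding events[OF Y] events[OF Y'] by (rule fdd[OF fdd_hyps])
qed

theorem mainTheorem2:
  fixes P :: "'w measure"
    and D :: "'a::metric_space set"
    and n :: nat
    and X :: "'a list \<Rightarrow> 'w \<Rightarrow> (real, real) bcontfun"
    and \<epsilon> \<delta> :: real
  assumes "prob_space P"
    and "n \<ge> 1"
    and meas: "\<And>d. d \<in> databases D n \<Longrightarrow> X d \<in> measurable P C01_borel"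
    and "\<epsilon> \<ge> 0" and "0 \<le> \<delta>" and "\<delta> \<le> 1"
    and fdd: "\<And>k t d d' B.
       k \<ge> 1 \<Longrightarrow> (\<forall>i<k. t i \<in> {0..1}) \<Longrightarrow> (\<forall>i j. i < j \<longrightarrow> j < k \<longrightarrow> t i < t j) \<Longrightarrow>
       d \<in> databases D n \<Longrightarrow> d' \<in> databases D n \<Longrightarrow> neighbours d d' \<Longrightarrow>
       B \<in> sets (Rk k) \<Longrightarrow>
       measure P {\<omega> \<in> space P. proj k t (X d \<omega>) \<in> B}
         \<le> exp \<epsilon> * measure P {\<omega> \<in> space P. proj k t (X d' \<omega>) \<in> B} + \<delta>"
  shows "\<forall>d \<in> databases D n. \<forall>d' \<in> databases D n. neighbours d d' \<longrightarrow>
           (\<forall>A \<in> sets C01_borel.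
              measure P {\<omega> \<in> space P. X d \<omega> \<in> A}
                \<le> exp \<epsilon> * measure P {\<omega> \<in> space P. X d' \<omega> \<in> A} + \<delta>)"
proof (intro ballI impI)
  fix d d' A
  assume d: "d \<in> databases D n" and d': "d' \<in> databases D n" and nb: "neighbours d d'"
    and A: "A \<in> sets C01_borel"
  interpret P: prob_space P by fact
  let ?law = "\<lambda>x. distr P C01_borel (X x)"
  have law: "measure (?law x) S = measure P {\<omega> \<in> space P. X x \<omega> \<in> S}"
    if "x \<in> databases D n" "S \<in> sets C01_borel" for x S
    using measure_distr[OF meas[OF that(1)] that(2)] by (simp add: vimage_def Int_def conj_commute)
  have cylinder_bound: "measure (?law d) C \<le> exp \<epsilon> * measure (?law d') C + \<delta>"
    if C: "C \<in> cylinders" for C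
  proof -
    have C_sets: "C \<in> sets C01_borel"
      using C cylinders_subset_sets by blast
    show ?thesis
      unfolding law[OF d C_sets] law[OF d' C_sets]
      by (rule cylinder_event_bound[OF meas[OF d] meas[OF d'] fdd[OF _ _ _ d d' nb] C])
  qed
  have "measure (?law d) A \<le> exp \<epsilon> * measure (?law d') A + \<delta>"
  proof (rule affine_bound_extends_to_sigma_sets[OF cylinders_algebra])
    show "finite_measure (?law d)" "finite_measure (?law d')"
      using meas[OF d] meas[OF d'] by (simp_all add: P.finite_measure_distr)
    show "sets (?law d) = sigma_sets C01 cylinders" "sets (?law d') = sigma_sets C01 cylinders"
      by (simp_all add: sets_C01_borel_eq_sigma_cylinders)
    show "A \<in> sigma_sets C01 cylinders"
      using A by (simp add: sets_C01_borel_eq_sigma_cylinders)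
  qed (simp_all add: cylinder_bound)
  then show "measure P {\<omega> \<in> space P. X d \<omega> \<in> A} \<le> exp \<epsilon> * measure P {\<omega> \<in> space P. X d' \<omega> \<in> A} + \<delta>"
    using law[OF d A] law[OF d' A] by simp
qed

end
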